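(* Let $\mathbb S=\{(X_1,X_2,A)\in\mathbb C^2\times\mathbb R: -2\,\mathrm{Re}(X_1+X_2)-2\,\mathrm{Re}(X_1\overline{X}_2e^{-2iA})+|X_1|^2+|X_2|^2+1=0\}$ and $\mathbb S_{123}=\{(X_1,X_2,A)\in\mathbb C^2\times\mathbb R:\mathrm{Re}(e^{iA})=0\}$. Writing $X_1=a+bi$, $X_2=c+di$, the intersection $\mathbb S\cap\mathbb S_{123}$ is not transversal; it is a union of $2$-dimensional real analytic varieties, given by the equations $a+c=1$, $b+d=0$, $A=\pm\pi/2+2k\pi$ ($k\in\mathbb Z$). *)

theory Defs
  imports "HOL-Analysis.Analysis"
begin

definition SF :: "complex \<times> complex \<times> real \<Rightarrow> real" where
  "SF = (\<lambda>(X1, X2, A). - 2 * Re (X1 + X2)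
          - 2 * Re (X1 * cnj X2 * exp (- 2 * \<i> * complex_of_real A))
          + (cmod X1)^2 + (cmod X2)^2 + 1)"

definition S123F :: "complex \<times> complex \<times> real \<Rightarrow> real" where
  "S123F = (\<lambda>(X1, X2, A). Re (exp (\<i> * complex_of_real A)))"

definition SS :: "(complex \<times> complex \<times> real) set" where
  "SS = {p. SF p = 0}"

definition SS123 :: "(complex \<times> complex \<times> real) set" where
  "SS123 = {p. S123F p = 0}"

definition transversal_at ::
  "('a::real_normed_vector \<Rightarrow> real) \<Rightarrow> ('a \<Rightarrow> real) \<Rightarrow> 'a \<Rightarrow> bool" where
  "transversal_at f g p \<longleftrightarrow>
     f differentiable (at p) \<and> g differentiable (at p) \<and>
     surj (\<lambda>v. (frechet_derivative f (at p) v, frechet_derivative g (at p) v))"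

end

theory Submission
  imports Defs
begin

text \<open>On the slice \<open>cos A = 0\<close> the phase factor \<open>exp (-2iA)\<close> equals \<open>-1\<close>, and the defining
  function of \<open>SS\<close> becomes the sum of squares \<open>(Re (X1 + X2) - 1)\<^sup>2 + (Im (X1 + X2))\<^sup>2\<close>.
  This gives the intersection, and it shows that \<open>SF\<close>, like \<open>S123F\<close>, is minimal at
  \<open>(1, 0, pi/2)\<close> along every direction \<open>(u1, u2, 0)\<close>. Hence both differentials there are
  multiples of \<open>dA\<close> and cannot be jointly onto \<open>\<real>\<^sup>2\<close>.\<close>

lemma has_derivative_eq_0_if_min_along_line:
  fixes f :: "'a::real_normed_vector \<Rightarrow> real"
  assumes deriv: "(f has_derivative D) (at p)" and min: "\<And>t. f p \<le> f (p + t *\<^sub>R v)"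
  shows "D v = 0"
proof -
  have "((\<lambda>t. p + t *\<^sub>R v) has_derivative (\<lambda>t. t *\<^sub>R v)) (at 0)"
    by (auto intro!: derivative_eq_intros)
  then have "((\<lambda>t. f (p + t *\<^sub>R v)) has_derivative (\<lambda>t. D (t *\<^sub>R v))) (at 0)"
    using has_derivative_compose[of "\<lambda>t. p + t *\<^sub>R v" _ 0 UNIV f D] deriv by simp
  then have "(\<lambda>t. D (t *\<^sub>R v)) = (\<lambda>_. 0)"
    by (rule has_derivative_local_min) (use min in simp)
  then show ?thesis
    by (metis scaleR_one)
qed

lemma linear_eq_last_coordinate_multiple:
  fixes D :: "'a::real_vector \<times> 'b::real_vector \<times> real \<Rightarrow> real"
  assumes "linear D" and vanish: "\<And>u1 u2. D (u1, u2, 0) = 0"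
  shows "D v = snd (snd v) * D (0, 0, 1)"
proof -
  have "D v = D ((fst v, fst (snd v), 0) + snd (snd v) *\<^sub>R (0, 0, 1))"
    by simp
  also have "\<dots> = D (fst v, fst (snd v), 0) + snd (snd v) * D (0, 0, 1)"
    by (simp only: linear_add[OF assms(1)] linear_scale[OF assms(1)] real_scaleR_def)
  finally show ?thesis
    using vanish by simp
qed

lemma not_surj_if_pair_of_multiples:
  fixes F :: "'a \<Rightarrow> real \<times> real"
  assumes F: "\<And>v. F v = (\<phi> v * a, \<phi> v * b)"
  shows "\<not> surj F"
proof
  assume onto: "surj F"
  show False
  proof (cases "a = 0 \<and> b = 0")
    case True
    obtain v where "(1, 0) = F v"
      using surjD[OF onto] by blast
    then show False
      using True F[of v] by simp
  next
    case False
    obtain v where "(b, - a) = F v"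
      using surjD[OF onto] by blast
    then have "b = \<phi> v * a" "- a = \<phi> v * b"
      using F[of v] by simp_all
    then have "a\<^sup>2 + b\<^sup>2 = 0"
      by algebra
    then show False
      using False by (simp add: sum_power2_eq_zero_iff)
  qed
qed

lemma not_transversal_at_if_min_on_slice:
  fixes f g :: "'a::real_normed_vector \<times> 'b::real_normed_vector \<times> real \<Rightarrow> real"
  assumes f_min: "\<And>u1 u2. f p \<le> f (p + (u1, u2, 0))"
    and g_min: "\<And>u1 u2. g p \<le> g (p + (u1, u2, 0))"
  shows "\<not> transversal_at f g p"
proof
  assume tr: "transversal_at f g p"
  define D where "D = frechet_derivative f (at p)"
  define D' where "D' = frechet_derivative g (at p)"
  have dD: "(f has_derivative D) (at p)" and dD': "(g has_derivative D') (at p)"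
    using tr frechet_derivative_works unfolding transversal_at_def D_def D'_def by blast+
  have slice: "p + t *\<^sub>R (u1, u2, 0) = p + (t *\<^sub>R u1, t *\<^sub>R u2, 0)" for t u1 u2
    by simp
  have "D (u1, u2, 0) = 0" for u1 u2
    by (rule has_derivative_eq_0_if_min_along_line[OF dD]) (simp only: slice f_min)
  then have D: "D v = snd (snd v) * D (0, 0, 1)" for v
    by (rule linear_eq_last_coordinate_multiple[OF has_derivative_linear[OF dD]])
  have "D' (u1, u2, 0) = 0" for u1 u2
    by (rule has_derivative_eq_0_if_min_along_line[OF dD']) (simp only: slice g_min)
  then have D': "D' v = snd (snd v) * D' (0, 0, 1)" for v
    by (rule linear_eq_last_coordinate_multiple[OF has_derivative_linear[OF dD']])
  have "surj (\<lambda>v. (D v, D' v))"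
    using tr unfolding transversal_at_def D_def D'_def by blast
  moreover have "\<not> surj (\<lambda>v. (D v, D' v))"
    by (rule not_surj_if_pair_of_multiples) (rule arg_cong2[where f = Pair, OF D D'])
  ultimately show False
    by contradiction
qed

lemma S123F_eq_cos: "S123F (X1, X2, A) = cos A"
  by (simp add: S123F_def Re_exp)

lemma SF_eq_sum_squares_if_cos_eq_0:
  assumes "cos A = 0"
  shows "SF (X1, X2, A) = (Re X1 + Re X2 - 1)\<^sup>2 + (Im X1 + Im X2)\<^sup>2"
proof -
  have "sin A ^ 2 = 1"
    using assms sin_cos_squared_add[of A] by simp
  then have "cis (- (2 * A)) = -1"
    using assms by (simp add: cis.ctr cos_double sin_double complex_eq_iff power2_eq_square)
  then have "exp (- 2 * \<i> * complex_of_real A) = -1"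
    by (simp add: cis_conv_exp mult_ac)
  then show ?thesis
    unfolding SF_def by (simp add: cmod_power2) (simp add: power2_eq_square algebra_simps)
qed

lemma cos_eq_0_iff_pm_pi_half:
  "cos A = 0 \<longleftrightarrow> (\<exists>k::int. A = pi / 2 + 2 * of_int k * pi \<or> A = - pi / 2 + 2 * of_int k * pi)"
proof
  assume "cos A = 0"
  then obtain n :: int where n: "A = n * pi + pi / 2"
    using cos_zero_iff_int2 by blast
  consider k where "n = 2 * k" | k where "n = 2 * k - 1"
    by (metis add_diff_cancel evenE oddE)
  then show "\<exists>k::int. A = pi / 2 + 2 * of_int k * pi \<or> A = - pi / 2 + 2 * of_int k * pi"
  proof cases
    case (1 k)
    then show ?thesis
      using n by (intro exI[of _ k]) (simp add: algebra_simps)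
  next
    case (2 k)
    then have "real_of_int n = 2 * of_int k - 1"
      by simp
    with n show ?thesis
      by (intro exI[of _ k]) (simp add: algebra_simps)
  qed
next
  assume "\<exists>k::int. A = pi / 2 + 2 * of_int k * pi \<or> A = - pi / 2 + 2 * of_int k * pi"
  then obtain k :: int where "A = pi / 2 + 2 * of_int k * pi \<or> A = - pi / 2 + 2 * of_int k * pi"
    by blast
  then have "A = of_int (2 * k) * pi + pi / 2 \<or> A = of_int (2 * k - 1) * pi + pi / 2"
    by (auto simp: algebra_simps)
  then show "cos A = 0"
    by (metis cos_zero_iff_int2)
qed

lemma SS_inter_SS123:
  "SS \<inter> SS123 =
     {(X1, X2, A). Re X1 + Re X2 = 1 \<and> Im X1 + Im X2 = 0 \<and>
        (\<exists>k::int. A = pi / 2 + 2 * of_int k * pi \<or> A = - pi / 2 + 2 * of_int k * pi)}"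
proof -
  have "(X1, X2, A) \<in> SS \<inter> SS123 \<longleftrightarrow> Re X1 + Re X2 = 1 \<and> Im X1 + Im X2 = 0 \<and> cos A = 0"
    for X1 X2 A
    by (auto simp: SS_def SS123_def S123F_eq_cos SF_eq_sum_squares_if_cos_eq_0
        sum_power2_eq_zero_iff)
  then show ?thesis
    by (auto simp: cos_eq_0_iff_pm_pi_half)
qed

lemma not_transversal_at_SF_S123F: "\<not> transversal_at SF S123F (1, 0, pi / 2)"
  by (rule not_transversal_at_if_min_on_slice)
    (simp_all add: S123F_eq_cos SF_eq_sum_squares_if_cos_eq_0)

theorem proposition3p6:
  shows "\<not> (\<forall>p \<in> SS \<inter> SS123. transversal_at SF S123F p) \<and>
         SS \<inter> SS123 =
           {(X1, X2, A). Re X1 + Re X2 = 1 \<and> Im X1 + Im X2 = 0 \<and>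
              (\<exists>k::int. A = pi / 2 + 2 * of_int k * pi \<or> A = - pi / 2 + 2 * of_int k * pi)}"
proof
  have "(1, 0, pi / 2) \<in> SS \<inter> SS123"
    by (simp add: SS_def SS123_def S123F_eq_cos SF_eq_sum_squares_if_cos_eq_0)
  then show "\<not> (\<forall>p \<in> SS \<inter> SS123. transversal_at SF S123F p)"
    using not_transversal_at_SF_S123F by blast
qed (fact SS_inter_SS123)

end
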